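(* Let $d\ge 1$, let $\Omega=\operatorname{diag}(\omega_j)_{j=1}^d\in\mathbb{R}^{d\times d}$ with all $\omega_j\ge 0$, and let $A\in\mathbb{C}^{d\times d}$ be self-adjoint. Let $0<h\le 1$ and let $\psi_1,\phi\colon\mathbb{R}\to\mathbb{R}$ be even functions such that $\psi_1(\xi)=\operatorname{sinc}(\xi)\phi(\xi)$ for all $\xi\in\mathbb{R}$ and, for constants $c_0,c_1\ge 0$, \[ |\psi_1(\xi)|\le c_0,\qquad |\phi(\xi)|\le c_0,\qquad |\phi(\xi)-1|\le c_1|\xi|\qquad\text{for all }\xi\in\mathbb{R}. \] Set $\Psi_1=\psi_1(h\Omega)$, $\Phi=\phi(h\Omega)$. For given $q_0,\dot q_0\in\mathbb{C}^d$, define $(q_n,\dot q_n)_{n\ge 0}$ recursively by \begin{align*} q_{n+1} &= \cos(h\Omega) q_n + h\operatorname{sinc}(h\Omega) \dot{q}_n - \tfrac12 h^2 \operatorname{sinc}(h\Omega) \Psi_1 A\Phi q_n,\\ \dot{q}_{n+1} &= -\Omega \sin(h\Omega) q_n + \cos(h\Omega) \dot{q}_n - \tfrac12 h \big( \cos(h\Omega) \Psi_1 A\Phi q_n + \Psi_1 A\Phi q_{n+1}\big). \end{align*} Then \[ \|\Omega q_n\| + \|\dot{q}_n\| \le C \qquad\text{for all } n\in\mathbb{N}, \] with a constant $C$ depending only on $c_0$, $\|A\|$, $\|q_0\|$, $\|\Omega q_0\|$, $\|\dot{q}_0\|$ and $\|q_n\|$.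
   Context: $\|\cdot\|$ is the Euclidean norm on $\mathbb{C}^d$ and, for matrices, the induced operator norm. $\operatorname{sinc}(\xi)=\sin(\xi)/\xi$ for $\xi\ne0$ and $\operatorname{sinc}(0)=1$. For a function $f\colon\mathbb{R}\to\mathbb{R}$, $f(h\Omega)$ denotes the diagonal matrix $\operatorname{diag}(f(h\omega_j))_{j=1}^d$. *)

theory Defs
  imports Complex_Main
begin

text \<open>Vectors in C^d are represented as functions nat => complex, of which only the
  entries with index < d matter; d x d matrices as nat => nat => complex (entries
  with indices < d matter). The dimension d is an ordinary variable so that it can be
  quantified inside the statement (the constant C must not depend on d).\<close>

definition sinc :: "real \<Rightarrow> real" where
  "sinc x = (if x = 0 then 1 else sin x / x)"

definition vnorm :: "nat \<Rightarrow> (nat \<Rightarrow> complex) \<Rightarrow> real" where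
  "vnorm d v = sqrt (\<Sum>j<d. (cmod (v j))^2)"

definition mvec :: "nat \<Rightarrow> (nat \<Rightarrow> nat \<Rightarrow> complex) \<Rightarrow> (nat \<Rightarrow> complex) \<Rightarrow> (nat \<Rightarrow> complex)" where
  "mvec d M v = (\<lambda>i. \<Sum>j<d. M i j * v j)"

definition opnorm :: "nat \<Rightarrow> (nat \<Rightarrow> nat \<Rightarrow> complex) \<Rightarrow> real" where
  "opnorm d M = Sup {vnorm d (mvec d M v) | v. vnorm d v \<le> 1}"

definition self_adjoint :: "nat \<Rightarrow> (nat \<Rightarrow> nat \<Rightarrow> complex) \<Rightarrow> bool" where
  "self_adjoint d M \<longleftrightarrow> (\<forall>i<d. \<forall>j<d. M i j = cnj (M j i))"

definition dapp :: "(real \<Rightarrow> real) \<Rightarrow> real \<Rightarrow> (nat \<Rightarrow> real) \<Rightarrow> (nat \<Rightarrow> complex) \<Rightarrow> (nat \<Rightarrow> complex)" where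
  "dapp f h \<omega> v = (\<lambda>j. complex_of_real (f (h * \<omega> j)) * v j)"

definition Omg :: "(nat \<Rightarrow> real) \<Rightarrow> (nat \<Rightarrow> complex) \<Rightarrow> (nat \<Rightarrow> complex)" where
  "Omg \<omega> v = (\<lambda>j. complex_of_real (\<omega> j) * v j)"

definition PAP :: "nat \<Rightarrow> (nat \<Rightarrow> real) \<Rightarrow> (nat \<Rightarrow> nat \<Rightarrow> complex) \<Rightarrow> real
   \<Rightarrow> (real \<Rightarrow> real) \<Rightarrow> (real \<Rightarrow> real) \<Rightarrow> (nat \<Rightarrow> complex) \<Rightarrow> (nat \<Rightarrow> complex)" where
  "PAP d \<omega> A h \<psi>1 \<phi> v = dapp \<psi>1 h \<omega> (mvec d A (dapp \<phi> h \<omega> v))"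

definition step :: "nat \<Rightarrow> (nat \<Rightarrow> real) \<Rightarrow> (nat \<Rightarrow> nat \<Rightarrow> complex) \<Rightarrow> real
   \<Rightarrow> (real \<Rightarrow> real) \<Rightarrow> (real \<Rightarrow> real)
   \<Rightarrow> (nat \<Rightarrow> complex) \<times> (nat \<Rightarrow> complex) \<Rightarrow> (nat \<Rightarrow> complex) \<times> (nat \<Rightarrow> complex)" where
  "step d \<omega> A h \<psi>1 \<phi> qp =
     (let q = fst qp; qd = snd qp;
          B = PAP d \<omega> A h \<psi>1 \<phi>;
          q' = (\<lambda>j. dapp cos h \<omega> q j + complex_of_real h * dapp sinc h \<omega> qd j
                    - complex_of_real (h^2 / 2) * dapp sinc h \<omega> (B q) j);
          qd' = (\<lambda>j. - Omg \<omega> (dapp sin h \<omega> q) j + dapp cos h \<omega> qd j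
                    - complex_of_real (h / 2) * (dapp cos h \<omega> (B q) j + B q' j))
      in (q', qd'))"

primrec traj :: "nat \<Rightarrow> (nat \<Rightarrow> real) \<Rightarrow> (nat \<Rightarrow> nat \<Rightarrow> complex) \<Rightarrow> real
   \<Rightarrow> (real \<Rightarrow> real) \<Rightarrow> (real \<Rightarrow> real) \<Rightarrow> (nat \<Rightarrow> complex) \<Rightarrow> (nat \<Rightarrow> complex)
   \<Rightarrow> nat \<Rightarrow> (nat \<Rightarrow> complex) \<times> (nat \<Rightarrow> complex)" where
  "traj d \<omega> A h \<psi>1 \<phi> q0 qd0 0 = (q0, qd0)"
| "traj d \<omega> A h \<psi>1 \<phi> q0 qd0 (Suc n) = step d \<omega> A h \<psi>1 \<phi> (traj d \<omega> A h \<psi>1 \<phi> q0 qd0 n)"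

end

(*
  The scheme conserves exactly the modified energy
    H(q, p) = |\<Omega>q|^2 + |p|^2 + Re <cos(h\<Omega>) \<Phi>q, A\<Phi>q> - h^2/4 |\<Psi>1 A \<Phi>q|^2.
  Written out mode by mode with sin(h\<omega>) = h\<omega> sinc(h\<omega>) and \<psi>1 = sinc \<phi>, one step
  changes H by Re <\<Phi>q_n, A\<Phi>q_(n+1)> - Re <\<Phi>q_(n+1), A\<Phi>q_n>, which vanishes because A
  is self-adjoint. The last two terms of H are bounded by multiples of |q|^2
  (Cauchy-Schwarz, |\<phi>|, |\<psi>1| <= c0, h <= 1), so |\<Omega>q_n|^2 + |qdot_n|^2 is bounded by
  H(q_0, qdot_0) plus such a multiple of |q_n|^2.
*)
theory Submission
  imports Defs "HOL-Analysis.L2_Norm"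
begin

definition re_inner :: "nat \<Rightarrow> (nat \<Rightarrow> complex) \<Rightarrow> (nat \<Rightarrow> complex) \<Rightarrow> real" where
  "re_inner d x y = (\<Sum>j<d. Re (x j * cnj (y j)))"

lemma vnorm_eq_L2_set: "vnorm d v = L2_set (\<lambda>j. cmod (v j)) {..<d}"
  by (simp add: vnorm_def L2_set_def)

lemma vnorm_nonneg: "0 \<le> vnorm d v"
  by (simp add: vnorm_eq_L2_set)

lemma power2_vnorm: "(vnorm d v)\<^sup>2 = (\<Sum>j<d. (cmod (v j))\<^sup>2)"
  by (simp add: vnorm_def sum_nonneg)

lemma vnorm_scale: "vnorm d (\<lambda>j. c * v j) = cmod c * vnorm d v"
  by (simp add: vnorm_eq_L2_set norm_mult L2_set_right_distrib)

lemma vnorm_eq_0_iff: "vnorm d v = 0 \<longleftrightarrow> (\<forall>j<d. v j = 0)"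
  by (auto simp: vnorm_eq_L2_set L2_set_eq_0_iff)

lemma vnorm_dapp_le:
  assumes "0 \<le> K" and "\<forall>j<d. \<bar>f (h * \<omega> j)\<bar> \<le> K"
  shows "vnorm d (dapp f h \<omega> v) \<le> K * vnorm d v"
  unfolding vnorm_eq_L2_set dapp_def L2_set_right_distrib[OF \<open>0 \<le> K\<close>]
  using assms(2) by (auto simp: norm_mult intro!: L2_set_mono mult_right_mono)

lemma abs_re_inner_le: "\<bar>re_inner d x y\<bar> \<le> vnorm d x * vnorm d y"
proof -
  have "\<bar>re_inner d x y\<bar> \<le> (\<Sum>j<d. \<bar>cmod (x j)\<bar> * \<bar>cmod (y j)\<bar>)"
    unfolding re_inner_def
  proof (rule order.trans[OF sum_abs sum_mono])
    fix j
    show "\<bar>Re (x j * cnj (y j))\<bar> \<le> \<bar>cmod (x j)\<bar> * \<bar>cmod (y j)\<bar>"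
      using abs_Re_le_cmod[of "x j * cnj (y j)"] by (simp add: norm_mult)
  qed
  also have "\<dots> \<le> vnorm d x * vnorm d y"
    unfolding vnorm_eq_L2_set by (rule L2_set_mult_ineq)
  finally show ?thesis .
qed

lemma re_inner_mvec_self_adjoint:
  assumes "self_adjoint d A"
  shows "re_inner d x (mvec d A y) = re_inner d y (mvec d A x)"
proof -
  have A: "cnj (A i j) = A j i" if "i < d" "j < d" for i j
    using assms that unfolding self_adjoint_def by metis
  have "(\<Sum>i<d. x i * cnj (mvec d A y i)) = (\<Sum>i<d. \<Sum>j<d. x i * A j i * cnj (y j))"
    by (auto simp: mvec_def A sum_distrib_left mult.assoc intro!: sum.cong)
  also have "\<dots> = (\<Sum>j<d. \<Sum>i<d. x i * A j i * cnj (y j))"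
    by (rule sum.swap)
  also have "\<dots> = cnj (\<Sum>j<d. y j * cnj (mvec d A x j))"
    by (auto simp: mvec_def sum_distrib_left intro!: sum.cong)
  finally have "Re (\<Sum>i<d. x i * cnj (mvec d A y i)) = Re (\<Sum>j<d. y j * cnj (mvec d A x j))"
    by (simp only: cnj.sel)
  then show ?thesis
    by (simp only: re_inner_def Re_sum)
qed

lemma bdd_above_opnorm: "bdd_above {vnorm d (mvec d A v) | v. vnorm d v \<le> 1}"
proof (rule bdd_aboveI, clarify)
  fix v assume v: "vnorm d v \<le> 1"
  have "cmod (mvec d A v i) \<le> (\<Sum>j<d. cmod (A i j))" for i
    unfolding mvec_def
  proof (rule order.trans[OF norm_sum sum_mono])
    fix j assume "j \<in> {..<d}"
    then have "cmod (v j) \<le> 1"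
      using member_le_L2_set[of "{..<d}" j "\<lambda>j. cmod (v j)"] v by (simp add: vnorm_eq_L2_set)
    then show "cmod (A i j * v j) \<le> cmod (A i j)"
      by (simp add: norm_mult mult_left_le)
  qed
  then have "L2_set (\<lambda>i. cmod (mvec d A v i)) {..<d} \<le> (\<Sum>i<d. \<Sum>j<d. cmod (A i j))"
    by (intro order.trans[OF L2_set_le_sum sum_mono]) auto
  then show "vnorm d (mvec d A v) \<le> (\<Sum>i<d. \<Sum>j<d. cmod (A i j))"
    by (simp add: vnorm_eq_L2_set)
qed

lemma vnorm_mvec_le_opnorm: "vnorm d v \<le> 1 \<Longrightarrow> vnorm d (mvec d A v) \<le> opnorm d A"
  unfolding opnorm_def by (rule cSup_upper[OF _ bdd_above_opnorm]) blast

lemma opnorm_nonneg: "0 \<le> opnorm d A"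
  using vnorm_mvec_le_opnorm[of d "\<lambda>_. 0" A] by (simp add: vnorm_def mvec_def)

lemma mvec_scale: "mvec d A (\<lambda>j. c * v j) = (\<lambda>i. c * mvec d A v i)"
  by (auto simp: mvec_def sum_distrib_left ac_simps)

lemma vnorm_mvec_le: "vnorm d (mvec d A v) \<le> opnorm d A * vnorm d v"
proof (cases "vnorm d v = 0")
  case True
  then have "vnorm d (mvec d A v) = 0"
    by (simp add: vnorm_eq_0_iff mvec_def)
  then show ?thesis
    using opnorm_nonneg vnorm_nonneg by simp
next
  case False
  then have "vnorm d v > 0"
    using vnorm_nonneg[of d v] by simp
  define c where "c = complex_of_real (1 / vnorm d v)"
  have c: "cmod c = 1 / vnorm d v"
    unfolding c_def norm_of_real using \<open>vnorm d v > 0\<close> by simp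
  have "vnorm d (\<lambda>j. c * v j) \<le> 1"
    unfolding vnorm_scale c using \<open>vnorm d v > 0\<close> by simp
  then have "vnorm d (mvec d A (\<lambda>j. c * v j)) \<le> opnorm d A"
    by (rule vnorm_mvec_le_opnorm)
  then have "vnorm d (mvec d A v) / vnorm d v \<le> opnorm d A"
    unfolding mvec_scale vnorm_scale c by simp
  then show ?thesis
    using \<open>vnorm d v > 0\<close> by (simp add: pos_divide_le_eq)
qed

text \<open>The energy balance of one step in a single mode j: \<open>u\<close> and \<open>v\<close> stand for the j-th
  components of \<open>A\<Phi>q\<close> and \<open>A\<Phi>q'\<close>.\<close>

lemma modal_energy_balance:
  fixes c s w h \<sigma> \<phi> \<psi> :: real and q p u v q' p' :: complex
  assumes "c\<^sup>2 + s\<^sup>2 = 1" and "s = h * \<sigma> * w" and "\<psi> = \<sigma> * \<phi>"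
    and q': "q' = c * q + h * (\<sigma> * p) - h\<^sup>2 / 2 * (\<sigma> * (\<psi> * u))"
    and p': "p' = - (w * (s * q)) + c * p - h / 2 * (c * (\<psi> * u) + \<psi> * v)"
  shows "(cmod (w * q'))\<^sup>2 + (cmod p')\<^sup>2 + Re (c * (\<phi> * q') * cnj v) - h\<^sup>2 / 4 * (cmod (\<psi> * v))\<^sup>2
       = (cmod (w * q))\<^sup>2 + (cmod p)\<^sup>2 + Re (c * (\<phi> * q) * cnj u) - h\<^sup>2 / 4 * (cmod (\<psi> * u))\<^sup>2
         + Re (\<phi> * q * cnj v) - Re (\<phi> * q' * cnj u)"
  using assms(1-3) unfolding q' p' cmod_power2 by simp algebra

definition modified_energy :: "nat \<Rightarrow> (nat \<Rightarrow> real) \<Rightarrow> (nat \<Rightarrow> nat \<Rightarrow> complex) \<Rightarrow> real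
    \<Rightarrow> (real \<Rightarrow> real) \<Rightarrow> (real \<Rightarrow> real) \<Rightarrow> (nat \<Rightarrow> complex) \<Rightarrow> (nat \<Rightarrow> complex) \<Rightarrow> real" where
  "modified_energy d \<omega> A h \<psi>1 \<phi> q p =
     (vnorm d (Omg \<omega> q))\<^sup>2 + (vnorm d p)\<^sup>2
     + re_inner d (dapp cos h \<omega> (dapp \<phi> h \<omega> q)) (mvec d A (dapp \<phi> h \<omega> q))
     - h\<^sup>2 / 4 * (vnorm d (PAP d \<omega> A h \<psi>1 \<phi> q))\<^sup>2"

lemma modified_energy_step:
  assumes "self_adjoint d A" and "0 < h" and "\<forall>x. \<psi>1 x = sinc x * \<phi> x"
  shows "modified_energy d \<omega> A h \<psi>1 \<phi> (fst (step d \<omega> A h \<psi>1 \<phi> qp)) (snd (step d \<omega> A h \<psi>1 \<phi> qp))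
       = modified_energy d \<omega> A h \<psi>1 \<phi> (fst qp) (snd qp)"
proof -
  obtain q p where qp: "qp = (q, p)"
    by fastforce
  define q' where "q' = fst (step d \<omega> A h \<psi>1 \<phi> qp)"
  define p' where "p' = snd (step d \<omega> A h \<psi>1 \<phi> qp)"
  define u where "u = mvec d A (dapp \<phi> h \<omega> q)"
  define v where "v = mvec d A (dapp \<phi> h \<omega> q')"
  let ?c = "\<lambda>j. cos (h * \<omega> j)" and ?\<sigma> = "\<lambda>j. sinc (h * \<omega> j)"
    and ?\<phi> = "\<lambda>j. \<phi> (h * \<omega> j)" and ?\<psi> = "\<lambda>j. \<psi>1 (h * \<omega> j)"
  have modal: "(cmod (\<omega> j * q' j))\<^sup>2 + (cmod (p' j))\<^sup>2 + Re (?c j * (?\<phi> j * q' j) * cnj (v j))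
        - h\<^sup>2 / 4 * (cmod (?\<psi> j * v j))\<^sup>2
      = (cmod (\<omega> j * q j))\<^sup>2 + (cmod (p j))\<^sup>2 + Re (?c j * (?\<phi> j * q j) * cnj (u j))
        - h\<^sup>2 / 4 * (cmod (?\<psi> j * u j))\<^sup>2
        + Re (?\<phi> j * q j * cnj (v j)) - Re (?\<phi> j * q' j * cnj (u j))" for j
  proof (rule modal_energy_balance)
    show "sin (h * \<omega> j) = h * ?\<sigma> j * \<omega> j"
      using \<open>0 < h\<close> by (auto simp: sinc_def)
    show "q' j = ?c j * q j + h * (?\<sigma> j * p j) - h\<^sup>2 / 2 * (?\<sigma> j * (?\<psi> j * u j))"
      by (simp add: q'_def qp step_def Let_def dapp_def PAP_def u_def)
    show "p' j = - (\<omega> j * (sin (h * \<omega> j) * q j)) + ?c j * p j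
        - h / 2 * (?c j * (?\<psi> j * u j) + ?\<psi> j * v j)"
      by (simp add: q'_def p'_def qp step_def Let_def dapp_def PAP_def u_def v_def Omg_def)
  qed (use assms(3) in auto)
  have "modified_energy d \<omega> A h \<psi>1 \<phi> q' p' = modified_energy d \<omega> A h \<psi>1 \<phi> q p
      + re_inner d (dapp \<phi> h \<omega> q) v - re_inner d (dapp \<phi> h \<omega> q') u"
    unfolding modified_energy_def PAP_def u_def[symmetric] v_def[symmetric]
    unfolding power2_vnorm re_inner_def dapp_def Omg_def
    using sum.cong[OF refl modal, where A="{..<d}"]
    by (simp add: sum.distrib sum_subtractf sum_distrib_left)
  then show ?thesis
    using re_inner_mvec_self_adjoint[OF assms(1)] by (simp add: qp q'_def p'_def u_def v_def)
qed

lemma modified_energy_traj: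
  assumes "self_adjoint d A" and "0 < h" and "\<forall>x. \<psi>1 x = sinc x * \<phi> x"
  shows "modified_energy d \<omega> A h \<psi>1 \<phi> (fst (traj d \<omega> A h \<psi>1 \<phi> q0 qd0 n)) (snd (traj d \<omega> A h \<psi>1 \<phi> q0 qd0 n))
       = modified_energy d \<omega> A h \<psi>1 \<phi> q0 qd0"
  using assms by (induction n) (simp_all add: modified_energy_step)

lemma vnorm_PAP_le:
  assumes "0 \<le> c0" and "\<forall>x. \<bar>\<psi>1 x\<bar> \<le> c0" and "\<forall>x. \<bar>\<phi> x\<bar> \<le> c0"
  shows "vnorm d (PAP d \<omega> A h \<psi>1 \<phi> q) \<le> c0\<^sup>2 * opnorm d A * vnorm d q"
proof -
  have "vnorm d (PAP d \<omega> A h \<psi>1 \<phi> q) \<le> c0 * vnorm d (mvec d A (dapp \<phi> h \<omega> q))"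
    unfolding PAP_def using assms(1,2) by (simp add: vnorm_dapp_le)
  also have "\<dots> \<le> c0 * (opnorm d A * vnorm d (dapp \<phi> h \<omega> q))"
    using assms(1) by (intro mult_left_mono vnorm_mvec_le)
  also have "\<dots> \<le> c0 * (opnorm d A * (c0 * vnorm d q))"
    using assms(1,3) by (intro mult_left_mono vnorm_dapp_le opnorm_nonneg) auto
  finally show ?thesis
    by (simp add: power2_eq_square ac_simps)
qed

lemma abs_re_inner_cos_le:
  assumes "0 \<le> c0" and "\<forall>x. \<bar>\<phi> x\<bar> \<le> c0"
  shows "\<bar>re_inner d (dapp cos h \<omega> (dapp \<phi> h \<omega> q)) (mvec d A (dapp \<phi> h \<omega> q))\<bar>
    \<le> c0\<^sup>2 * opnorm d A * (vnorm d q)\<^sup>2"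
proof -
  have \<phi>q: "vnorm d (dapp \<phi> h \<omega> q) \<le> c0 * vnorm d q"
    using assms by (simp add: vnorm_dapp_le)
  have "vnorm d (dapp cos h \<omega> (dapp \<phi> h \<omega> q)) \<le> c0 * vnorm d q"
    using vnorm_dapp_le[of 1 d cos h \<omega> "dapp \<phi> h \<omega> q"] \<phi>q by simp
  moreover have "vnorm d (mvec d A (dapp \<phi> h \<omega> q)) \<le> opnorm d A * (c0 * vnorm d q)"
    using vnorm_mvec_le \<phi>q opnorm_nonneg by (rule order.trans[OF _ mult_left_mono])
  ultimately have "vnorm d (dapp cos h \<omega> (dapp \<phi> h \<omega> q)) * vnorm d (mvec d A (dapp \<phi> h \<omega> q))
      \<le> (c0 * vnorm d q) * (opnorm d A * (c0 * vnorm d q))"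
    using assms(1) by (intro mult_mono) (simp_all add: vnorm_nonneg)
  then have "\<bar>re_inner d (dapp cos h \<omega> (dapp \<phi> h \<omega> q)) (mvec d A (dapp \<phi> h \<omega> q))\<bar>
      \<le> (c0 * vnorm d q) * (opnorm d A * (c0 * vnorm d q))"
    by (rule order.trans[OF abs_re_inner_le])
  then show ?thesis
    by (simp add: power2_eq_square ac_simps)
qed

lemma traj_harmonic_energy_le:
  assumes "self_adjoint d A" and "0 < h" and "h \<le> 1" and "\<forall>x. \<psi>1 x = sinc x * \<phi> x"
    and "0 \<le> c0" and "\<forall>x. \<bar>\<psi>1 x\<bar> \<le> c0" and "\<forall>x. \<bar>\<phi> x\<bar> \<le> c0"
    and "traj d \<omega> A h \<psi>1 \<phi> q0 qd0 n = (q, p)"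
  shows "(vnorm d (Omg \<omega> q))\<^sup>2 + (vnorm d p)\<^sup>2
    \<le> (vnorm d (Omg \<omega> q0))\<^sup>2 + (vnorm d qd0)\<^sup>2
       + c0\<^sup>2 * opnorm d A * ((vnorm d q0)\<^sup>2 + (vnorm d q)\<^sup>2) + (c0\<^sup>2 * opnorm d A * vnorm d q)\<^sup>2"
proof -
  let ?R = "\<lambda>q. re_inner d (dapp cos h \<omega> (dapp \<phi> h \<omega> q)) (mvec d A (dapp \<phi> h \<omega> q))"
  let ?P = "\<lambda>q. vnorm d (PAP d \<omega> A h \<psi>1 \<phi> q)"
  have conserved: "modified_energy d \<omega> A h \<psi>1 \<phi> q p = modified_energy d \<omega> A h \<psi>1 \<phi> q0 qd0"
    using modified_energy_traj[OF assms(1,2,4), of \<omega> q0 qd0 n] assms(8) by simp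
  have "h\<^sup>2 / 4 * (?P q)\<^sup>2 \<le> (?P q)\<^sup>2"
    using assms(2,3) power_le_one[of h 2] by (intro mult_left_le_one_le) auto
  also have "(?P q)\<^sup>2 \<le> (c0\<^sup>2 * opnorm d A * vnorm d q)\<^sup>2"
    using assms(5-7) by (intro power_mono vnorm_PAP_le vnorm_nonneg)
  finally have "h\<^sup>2 / 4 * (?P q)\<^sup>2 \<le> (c0\<^sup>2 * opnorm d A * vnorm d q)\<^sup>2" .
  moreover have "?R q0 \<le> c0\<^sup>2 * opnorm d A * (vnorm d q0)\<^sup>2"
    and "- ?R q \<le> c0\<^sup>2 * opnorm d A * (vnorm d q)\<^sup>2"
    using abs_re_inner_cos_le[OF assms(5,7)] by (simp_all add: abs_le_iff)
  moreover have "0 \<le> h\<^sup>2 / 4 * (?P q0)\<^sup>2"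
    by simp
  ultimately show ?thesis
    using conserved unfolding modified_energy_def by (simp only: distrib_left)
qed

lemma add_le_sqrt_sum_squares: "x + y \<le> sqrt (2 * (x\<^sup>2 + y\<^sup>2))"
  for x y :: real
  by (rule real_le_rsqrt) (use sum_squares_bound[of x y] in \<open>simp add: power2_sum\<close>)

definition traj_bound :: "real \<Rightarrow> real \<Rightarrow> real \<Rightarrow> real \<Rightarrow> real \<Rightarrow> real \<Rightarrow> real" where
  "traj_bound c0 a Q0 W P Q =
     sqrt (2 * (W\<^sup>2 + P\<^sup>2 + c0\<^sup>2 * a * (Q0\<^sup>2 + Q\<^sup>2) + (c0\<^sup>2 * a * Q)\<^sup>2))"

lemma traj_le_traj_bound:
  assumes "self_adjoint d A" and "0 < h" and "h \<le> 1" and "\<forall>x. \<psi>1 x = sinc x * \<phi> x"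
    and "0 \<le> c0" and "\<forall>x. \<bar>\<psi>1 x\<bar> \<le> c0" and "\<forall>x. \<bar>\<phi> x\<bar> \<le> c0"
  shows "vnorm d (Omg \<omega> (fst (traj d \<omega> A h \<psi>1 \<phi> q0 qd0 n))) + vnorm d (snd (traj d \<omega> A h \<psi>1 \<phi> q0 qd0 n))
    \<le> traj_bound c0 (opnorm d A) (vnorm d q0) (vnorm d (Omg \<omega> q0)) (vnorm d qd0)
         (vnorm d (fst (traj d \<omega> A h \<psi>1 \<phi> q0 qd0 n)))"
proof -
  obtain q p where qp: "traj d \<omega> A h \<psi>1 \<phi> q0 qd0 n = (q, p)"
    by fastforce
  show ?thesis
    unfolding traj_bound_def qp prod.sel
    by (rule order.trans[OF add_le_sqrt_sum_squares])
      (use traj_harmonic_energy_le[OF assms qp] in simp)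
qed

theorem lemma3:
  "\<exists>C :: real \<Rightarrow> real \<Rightarrow> real \<Rightarrow> real \<Rightarrow> real \<Rightarrow> real \<Rightarrow> real.
    \<forall>(d::nat) (\<omega>::nat \<Rightarrow> real) (A::nat \<Rightarrow> nat \<Rightarrow> complex) (h::real)
      (\<psi>1::real \<Rightarrow> real) (\<phi>::real \<Rightarrow> real) (c0::real) (c1::real)
      (q0::nat \<Rightarrow> complex) (qd0::nat \<Rightarrow> complex) (n::nat).
      d \<ge> 1 \<and> (\<forall>j<d. \<omega> j \<ge> 0) \<and> self_adjoint d A \<and> 0 < h \<and> h \<le> 1
      \<and> (\<forall>x. \<psi>1 (-x) = \<psi>1 x) \<and> (\<forall>x. \<phi> (-x) = \<phi> x)
      \<and> (\<forall>x. \<psi>1 x = sinc x * \<phi> x)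
      \<and> c0 \<ge> 0 \<and> c1 \<ge> 0
      \<and> (\<forall>x. \<bar>\<psi>1 x\<bar> \<le> c0) \<and> (\<forall>x. \<bar>\<phi> x\<bar> \<le> c0) \<and> (\<forall>x. \<bar>\<phi> x - 1\<bar> \<le> c1 * \<bar>x\<bar>)
      \<longrightarrow> vnorm d (Omg \<omega> (fst (traj d \<omega> A h \<psi>1 \<phi> q0 qd0 n)))
            + vnorm d (snd (traj d \<omega> A h \<psi>1 \<phi> q0 qd0 n))
          \<le> C c0 (opnorm d A) (vnorm d q0) (vnorm d (Omg \<omega> q0)) (vnorm d qd0)
               (vnorm d (fst (traj d \<omega> A h \<psi>1 \<phi> q0 qd0 n)))"
  by (intro exI[of _ traj_bound] allI impI)
    (auto intro!: traj_le_traj_bound)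

end
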